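(* Let $\mathcal{L}$ be a set closed under a binary connective $\wedge$ and a unary connective $\neg$, and let $\langle \mathcal{M}, \models, f\rangle$ be a restricted fC-model for $\mathcal{L}$ that behaves classically with respect to $\wedge$ and $\neg$, i.e. for every $m \in \mathcal{M}$ and $a, b \in \mathcal{L}$: $m \models a\wedge b$ iff ($m \models a$ and $m \models b$), and $m \models \neg a$ iff $m \not\models a$. Let $\mathcal{C}(A) = \overline{f(\widehat{A})}$ for $A \subseteq \mathcal{L}$. Then for all $A \subseteq \mathcal{L}$ and $a, b \in \mathcal{L}$: ($\wedge$-R) $\mathcal{C}(A \cup \{a\wedge b\}) = \mathcal{C}(A \cup \{a, b\})$; ($\neg$-R1) $\mathcal{C}(A \cup \{a, \neg a\}) = \mathcal{L}$; ($\neg$-R2) if $\mathcal{C}(A \cup \{\neg a\}) = \mathcal{L}$ then $a \in \mathcal{C}(A)$.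
   Context: An fC-model for $\mathcal{L}$ is a triple $\langle \mathcal{M}, \models, f\rangle$ where $\mathcal{M}$ is any set, $\models \subseteq \mathcal{M}\times\mathcal{L}$ is a binary relation, and $f: 2^{\mathcal{M}} \to 2^{\mathcal{M}}$ is defined on all subsets of $\mathcal{M}$ and satisfies, for all $X, Y \subseteq \mathcal{M}$: Contraction $f(X) \subseteq X$, and Local Cumulativity $f(X) \subseteq Y \subseteq X \Rightarrow f(Y) = f(X)$. It is restricted if also $f(X) = \emptyset \Rightarrow X = \emptyset$. For $A \subseteq \mathcal{L}$, $\widehat{A} = \{x \in \mathcal{M} : x \models a\ \forall a \in A\}$; for $X \subseteq \mathcal{M}$, $\overline{X} = \{a \in \mathcal{L} : x \models a\ \forall x \in X\}$. *)

theory Defs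
  imports Main
begin

definition fC_model :: "'m set \<Rightarrow> 'l set \<Rightarrow> ('m \<Rightarrow> 'l \<Rightarrow> bool) \<Rightarrow> ('m set \<Rightarrow> 'm set) \<Rightarrow> bool" where
  "fC_model M L sat f \<longleftrightarrow>
     (\<forall>X. X \<subseteq> M \<longrightarrow> f X \<subseteq> X) \<and>
     (\<forall>X Y. X \<subseteq> M \<longrightarrow> Y \<subseteq> M \<longrightarrow> f X \<subseteq> Y \<longrightarrow> Y \<subseteq> X \<longrightarrow> f Y = f X)"

definition restricted_fC_model :: "'m set \<Rightarrow> 'l set \<Rightarrow> ('m \<Rightarrow> 'l \<Rightarrow> bool) \<Rightarrow> ('m set \<Rightarrow> 'm set) \<Rightarrow> bool" where
  "restricted_fC_model M L sat f \<longleftrightarrow>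
     fC_model M L sat f \<and> (\<forall>X. X \<subseteq> M \<longrightarrow> f X = {} \<longrightarrow> X = {})"

text \<open>The hat operator: models of all formulas in A.\<close>
definition mods :: "'m set \<Rightarrow> ('m \<Rightarrow> 'l \<Rightarrow> bool) \<Rightarrow> 'l set \<Rightarrow> 'm set" where
  "mods M sat A = {x \<in> M. \<forall>a\<in>A. sat x a}"

text \<open>The overline operator: formulas satisfied by all models in X.\<close>
definition theo :: "'l set \<Rightarrow> ('m \<Rightarrow> 'l \<Rightarrow> bool) \<Rightarrow> 'm set \<Rightarrow> 'l set" where
  "theo L sat X = {a \<in> L. \<forall>x\<in>X. sat x a}"

definition Cn :: "'m set \<Rightarrow> 'l set \<Rightarrow> ('m \<Rightarrow> 'l \<Rightarrow> bool) \<Rightarrow> ('m set \<Rightarrow> 'm set) \<Rightarrow> 'l set \<Rightarrow> 'l set" where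
  "Cn M L sat f A = theo L sat (f (mods M sat A))"

end

theory Submission
  imports Defs
begin

text \<open>Contraction gives \<open>\<overline>\<widehat>A \<subseteq> \<C>(A)\<close>, and \<open>\<widehat>A = \<emptyset>\<close> gives \<open>\<C>(A) = \<L>\<close>.
  Conversely, in a restricted model \<open>\<C>(A) = \<L>\<close> puts both \<open>a\<close> and \<open>\<not>a\<close> into \<open>\<C>(A)\<close>,
  so \<open>f(\<widehat>A) = \<emptyset>\<close> and hence \<open>\<widehat>A = \<emptyset>\<close>. Each rule thereby becomes a statement about
  sets of models: \<open>\<widehat>(A \<union> {a \<and> b}) = \<widehat>(A \<union> {a, b})\<close>, \<open>\<widehat>(A \<union> {a, \<not>a}) = \<emptyset>\<close>, and
  \<open>\<widehat>(A \<union> {\<not>a}) = \<emptyset>\<close> says that every model of \<open>A\<close> satisfies \<open>a\<close>.\<close>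

lemma restricted_fC_model_fC_model: "restricted_fC_model M L sat f \<Longrightarrow> fC_model M L sat f"
  unfolding restricted_fC_model_def by simp

lemma fC_model_contraction: "fC_model M L sat f \<Longrightarrow> X \<subseteq> M \<Longrightarrow> f X \<subseteq> X"
  unfolding fC_model_def by blast

lemma restricted_fC_model_empty_iff:
  assumes "restricted_fC_model M L sat f" and "X \<subseteq> M"
  shows "f X = {} \<longleftrightarrow> X = {}"
proof
  assume "f X = {}"
  then show "X = {}"
    using assms unfolding restricted_fC_model_def by blast
next
  assume "X = {}"
  then show "f X = {}"
    using fC_model_contraction[OF restricted_fC_model_fC_model[OF assms(1)] assms(2)] by blast
qed

lemma mods_subset: "mods M sat A \<subseteq> M"
  unfolding mods_def by blast

lemma theo_antimono: "X \<subseteq> Y \<Longrightarrow> theo L sat Y \<subseteq> theo L sat X"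
  unfolding theo_def by blast

lemma theo_empty [simp]: "theo L sat {} = L"
  unfolding theo_def by blast

lemma Cn_supraclassical:
  "fC_model M L sat f \<Longrightarrow> theo L sat (mods M sat A) \<subseteq> Cn M L sat f A"
  unfolding Cn_def by (rule theo_antimono, erule fC_model_contraction, rule mods_subset)

lemma Cn_eq_L_iff_mods_empty:
  assumes "restricted_fC_model M L sat f"
    and "a \<in> L" and "b \<in> L" and contradictory: "\<And>m. m \<in> M \<Longrightarrow> sat m a \<Longrightarrow> \<not> sat m b"
  shows "Cn M L sat f A = L \<longleftrightarrow> mods M sat A = {}"
proof
  assume "Cn M L sat f A = L"
  with assms(2,3) have "a \<in> Cn M L sat f A" "b \<in> Cn M L sat f A"
    by simp_all
  then have "\<forall>x \<in> f (mods M sat A). sat x a \<and> sat x b"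
    unfolding Cn_def theo_def by simp
  moreover have "f (mods M sat A) \<subseteq> M"
    using fC_model_contraction[OF restricted_fC_model_fC_model[OF assms(1)] mods_subset] mods_subset
    by (rule order_trans)
  ultimately have "f (mods M sat A) = {}"
    using contradictory by blast
  then show "mods M sat A = {}"
    using restricted_fC_model_empty_iff[OF assms(1) mods_subset] by blast
next
  assume "mods M sat A = {}"
  then show "Cn M L sat f A = L"
    using restricted_fC_model_empty_iff[OF assms(1), of "{}"] unfolding Cn_def by simp
qed

theorem theorem3:
  fixes M :: "'m set" and L :: "'l set" and sat :: "'m \<Rightarrow> 'l \<Rightarrow> bool"
    and f :: "'m set \<Rightarrow> 'm set" and conj :: "'l \<Rightarrow> 'l \<Rightarrow> 'l" and neg :: "'l \<Rightarrow> 'l"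
  assumes closed_conj: "\<And>a b. a \<in> L \<Longrightarrow> b \<in> L \<Longrightarrow> conj a b \<in> L"
    and closed_neg: "\<And>a. a \<in> L \<Longrightarrow> neg a \<in> L"
    and model: "restricted_fC_model M L sat f"
    and sat_conj: "\<And>m a b. m \<in> M \<Longrightarrow> a \<in> L \<Longrightarrow> b \<in> L \<Longrightarrow> sat m (conj a b) \<longleftrightarrow> sat m a \<and> sat m b"
    and sat_neg: "\<And>m a. m \<in> M \<Longrightarrow> a \<in> L \<Longrightarrow> sat m (neg a) \<longleftrightarrow> \<not> sat m a"
  shows "\<forall>A a b. A \<subseteq> L \<longrightarrow> a \<in> L \<longrightarrow> b \<in> L \<longrightarrow>
           Cn M L sat f (A \<union> {conj a b}) = Cn M L sat f (A \<union> {a, b}) \<and>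
           Cn M L sat f (A \<union> {a, neg a}) = L \<and>
           (Cn M L sat f (A \<union> {neg a}) = L \<longrightarrow> a \<in> Cn M L sat f A)"
proof (intro allI impI conjI)
  fix A a b assume "A \<subseteq> L" and a: "a \<in> L" and b: "b \<in> L"
  have "\<And>m. m \<in> M \<Longrightarrow> sat m a \<Longrightarrow> \<not> sat m (neg a)"
    using sat_neg a by simp
  then have Cn_eq_L: "\<And>B. Cn M L sat f B = L \<longleftrightarrow> mods M sat B = {}"
    by (rule Cn_eq_L_iff_mods_empty[OF model a closed_neg[OF a]])
  have "mods M sat (A \<union> {conj a b}) = mods M sat (A \<union> {a, b})"
    unfolding mods_def using sat_conj a b by auto
  then show "Cn M L sat f (A \<union> {conj a b}) = Cn M L sat f (A \<union> {a, b})"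
    unfolding Cn_def by simp
  have "mods M sat (A \<union> {a, neg a}) = {}"
    unfolding mods_def using sat_neg a by auto
  then show "Cn M L sat f (A \<union> {a, neg a}) = L"
    using Cn_eq_L by simp
  assume "Cn M L sat f (A \<union> {neg a}) = L"
  then have "mods M sat (A \<union> {neg a}) = {}"
    using Cn_eq_L by simp
  then have "\<forall>x \<in> mods M sat A. sat x a"
    unfolding mods_def using sat_neg[OF _ a] by blast
  with a have "a \<in> theo L sat (mods M sat A)"
    unfolding theo_def by blast
  then show "a \<in> Cn M L sat f A"
    by (rule subsetD[OF Cn_supraclassical[OF restricted_fC_model_fC_model[OF model]]])
qed

end
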